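(* Suppose $F$ is regular, i.e., $r''$ is bounded above on some neighborhood $(1-\delta,1)$ of $1$. Define \[ k=\sup\Big\{\alpha>1:\ r(v)r''(v)+r'(v)\le 1 \text{ for all } v\in(0,1) \text{ with } \psi(v)\ge \tfrac1\alpha\Big\}\in(1,\infty]. \] If $q_h\le kc$, then \[ r(v)r''(v)+r'(v)\le 1 \quad\text{for all } v\in\big(\overline p(q_h),\overline p(q_\ell)\big). \]
   Context: Let $0<q_\ell<q_h<\infty$, $Q=[q_\ell,q_h]$, and let $c$ be a real number with $0<c<q_\ell$. Let $F$ be a probability distribution on $[0,1]$ with support $[0,1]$ admitting a twice continuously differentiable density $f:(0,1)\to\mathbb{R}_{>0}$. Define the inverse hazard rate $r(v)=(1-F(v))/f(v)$ and the virtual valuation $\psi(v)=v-r(v)$ on $(0,1)$, and assume $\psi'(v)>0$ whenever $\psi(v)>0$. For $q\in Q$, $p(q)$ is the unique maximizer over $p\in\mathbb{R}$ of $(p-c)\big(1-F(p/q)\big)$, and $\overline p(q)=p(q)/q$. *)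

theory Defs
  imports "HOL-Analysis.Analysis"
begin

definition C2_on :: "(real \<Rightarrow> real) \<Rightarrow> real set \<Rightarrow> bool" where
  "C2_on g S \<longleftrightarrow> (\<forall>x\<in>S. g differentiable at x) \<and>
                  (\<forall>x\<in>S. deriv g differentiable at x) \<and>
                  continuous_on S (deriv (deriv g))"

definition inv_hazard :: "(real \<Rightarrow> real) \<Rightarrow> (real \<Rightarrow> real) \<Rightarrow> real \<Rightarrow> real" where
  "inv_hazard F f v = (1 - F v) / f v"

definition virt_val :: "(real \<Rightarrow> real) \<Rightarrow> (real \<Rightarrow> real) \<Rightarrow> real \<Rightarrow> real" where
  "virt_val F f v = v - inv_hazard F f v"

definition opt_price :: "(real \<Rightarrow> real) \<Rightarrow> real \<Rightarrow> real \<Rightarrow> real" where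
  "opt_price F c q = (THE p. \<forall>p'. (p' - c) * (1 - F (p' / q)) \<le> (p - c) * (1 - F (p / q)))"

definition opt_price_bar :: "(real \<Rightarrow> real) \<Rightarrow> real \<Rightarrow> real \<Rightarrow> real" where
  "opt_price_bar F c q = opt_price F c q / q"

definition k_const :: "(real \<Rightarrow> real) \<Rightarrow> (real \<Rightarrow> real) \<Rightarrow> ereal" where
  "k_const F f = Sup (ereal ` {\<alpha>::real. \<alpha> > 1 \<and>
      (\<forall>v\<in>{0<..<1}. virt_val F f v \<ge> 1 / \<alpha> \<longrightarrow>
         inv_hazard F f v * deriv (deriv (inv_hazard F f)) v + deriv (inv_hazard F f) v \<le> 1)})"

end

theory Submission imports Defs begin

text \<open>The first-order condition for the optimal price gives \<open>\<psi>(pbar(q)) = c/q\<close>. Since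
  \<open>\<psi>\<close> is strictly increasing wherever it is positive, every \<open>v > pbar(q\<^sub>h)\<close> has
  \<open>\<psi>(v) > c/q\<^sub>h \<ge> 1/k\<close>. Hence \<open>1/\<psi>(v) < k\<close>, so some \<open>\<alpha>\<close> in the set defining
  \<open>k\<close> has \<open>\<psi>(v) \<ge> 1/\<alpha>\<close>, which is the inequality at \<open>v\<close>.\<close>

definition profit :: "(real \<Rightarrow> real) \<Rightarrow> real \<Rightarrow> real \<Rightarrow> real \<Rightarrow> real" where
  "profit F c q p = (p - c) * (1 - F (p / q))"

lemma opt_price_eq_profit_argmax:
  "opt_price F c q = (THE p. \<forall>p'. profit F c q p' \<le> profit F c q p)"
  by (simp add: opt_price_def profit_def)

lemma less_if_deriv_pos_where_pos:
  fixes g g' :: "real \<Rightarrow> real"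
  assumes der: "\<And>x. x \<in> {a..b} \<Longrightarrow> (g has_real_derivative g' x) (at x)"
    and deriv_pos: "\<And>x. x \<in> {a..b} \<Longrightarrow> 0 < g x \<Longrightarrow> 0 < g' x"
    and "a < b" and "0 < g a"
  shows "g a < g b"
proof (rule ccontr)
  assume not_less: "\<not> g a < g b"
  have "continuous_on {a..b} g"
    by (rule continuous_at_imp_continuous_on) (use DERIV_isCont der in blast)
  then obtain m where m: "m \<in> {a..b}" "\<forall>y\<in>{a..b}. g y \<le> g m"
    using continuous_attains_sup[of "{a..b}" g] \<open>a < b\<close> by auto
  obtain d where "d > 0" and d: "\<forall>h>0. h < d \<longrightarrow> g a < g (a + h)"
    using DERIV_pos_inc_right[OF der[of a] deriv_pos[of a]] \<open>a < b\<close> \<open>0 < g a\<close> by auto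
  define h where "h = min (d / 2) (b - a)"
  have "0 < h" "h < d" "a + h \<in> {a..b}"
    using \<open>d > 0\<close> \<open>a < b\<close> by (auto simp: h_def)
  then have "g a < g m"
    using d m(2) by (meson less_le_trans)
  then have m_inner: "a < m" "m < b"
    using m(1) not_less by (auto simp: order.order_iff_strict)
  have "0 < g' m"
    using deriv_pos m(1) \<open>0 < g a\<close> \<open>g a < g m\<close> by simp
  moreover have "g' m = 0"
  proof (rule DERIV_local_max[OF der[OF m(1)]])
    show "0 < min (m - a) (b - m)" using m_inner by simp
    show "\<forall>y. \<bar>m - y\<bar> < min (m - a) (b - m) \<longrightarrow> g y \<le> g m"
      using m(2) by (auto simp: abs_if)
  qed
  ultimately show False by simp
qed

lemma ereal_divide_le_if_le_mult:
  fixes k :: ereal and q c :: real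
  assumes "0 < c" and "ereal q \<le> k * ereal c"
  shows "ereal (q / c) \<le> k"
proof (cases k)
  case (real r)
  then show ?thesis using assms by (simp add: field_simps)
qed (use assms in auto)

lemma hazard_inequality_if_inverse_virt_val_less_k_const:
  assumes "v \<in> {0<..<1}" and "0 < virt_val F f v"
    and "ereal (1 / virt_val F f v) < k_const F f"
  shows "inv_hazard F f v * deriv (deriv (inv_hazard F f)) v + deriv (inv_hazard F f) v \<le> 1"
proof -
  obtain \<alpha> where "\<alpha> > 1" and "1 / virt_val F f v < \<alpha>"
    and cond: "\<forall>v\<in>{0<..<1}. virt_val F f v \<ge> 1 / \<alpha> \<longrightarrow>
         inv_hazard F f v * deriv (deriv (inv_hazard F f)) v + deriv (inv_hazard F f) v \<le> 1"
    using assms(3) unfolding k_const_def less_Sup_iff by auto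
  then have "1 / \<alpha> \<le> virt_val F f v"
    using assms(2) by (simp add: field_simps)
  then show ?thesis using cond assms(1) by blast
qed

locale cdf_with_density =
  fixes F f :: "real \<Rightarrow> real"
  assumes F_below: "\<forall>x. x \<le> 0 \<longrightarrow> F x = 0"
    and F_above: "\<forall>x. 1 \<le> x \<longrightarrow> F x = 1"
    and F_density: "\<forall>x\<in>{0..1}. (f has_integral F x) {0..x}"
    and f_pos: "\<forall>v\<in>{0<..<1}. f v > 0"
    and f_continuous: "continuous_on {0<..<1} f"
begin

lemma F_has_real_derivative:
  assumes "0 < x" "x < 1"
  shows "(F has_real_derivative f x) (at x)"
proof -
  define a b where "a = x / 2" and "b = (x + 1) / 2"
  have ab: "0 < a" "a < x" "x < b" "b < 1" using assms by (auto simp: a_def b_def)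
  have F_eq: "F a + integral {a..u} f = F u" if "u \<in> {a<..<b}" for u
  proof -
    have "(f has_integral F u) {0..u}" "(f has_integral F a) {0..a}"
      using F_density that ab by auto
    then show ?thesis
      using Henstock_Kurzweil_Integration.integral_combine[of 0 a u f] that ab
      by (auto simp: integral_unique has_integral_integrable)
  qed
  have "continuous_on {a..b} f"
    using f_continuous by (rule continuous_on_subset) (use ab in auto)
  then have "((\<lambda>u. integral {a..u} f) has_vector_derivative f x) (at x within {a..b})"
    by (rule integral_has_vector_derivative) (use ab in auto)
  then have "((\<lambda>u. F a + integral {a..u} f) has_real_derivative f x) (at x)"
    using ab by (auto simp: has_real_derivative_iff_has_vector_derivative at_within_Icc_at
        intro: derivative_eq_intros)
  then show ?thesis
  proof (rule has_field_derivative_transform_within_open)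
    show "open {a<..<b}" "x \<in> {a<..<b}" using ab by auto
  qed (rule F_eq)
qed

lemma F_continuous_on: "continuous_on {0..1} F"
proof -
  have "continuous_on {0..1} (\<lambda>x. integral {0..x} f)"
    using F_density by (intro indefinite_integral_continuous_1) auto
  moreover have "integral {0..x} f = F x" if "x \<in> {0..1}" for x
    using F_density that by (simp add: integral_unique)
  ultimately show ?thesis
    using continuous_on_cong by (metis (no_types, lifting))
qed

lemma F_strict_mono:
  assumes "0 \<le> x" "x < y" "y \<le> 1"
  shows "F x < F y"
proof (rule DERIV_pos_imp_increasing_open[OF \<open>x < y\<close>])
  show "\<exists>d. DERIV F z :> d \<and> d > 0" if "x < z" "z < y" for z
    using F_has_real_derivative[of z] f_pos assms that by auto
  show "continuous_on {x..y} F"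
    using F_continuous_on by (rule continuous_on_subset) (use assms in auto)
qed

lemma F_le_1: "F x \<le> 1"
  using F_strict_mono[of x 1] F_below F_above
  by (cases "x \<le> 0"; cases "x < 1") auto

lemma F_less_1: "x < 1 \<Longrightarrow> F x < 1"
  using F_strict_mono[of x 1] F_below F_above
  by (cases "x \<le> 0") auto

context
  fixes c q :: real
  assumes c_pos: "0 < c" and c_less_q: "c < q"
begin

lemma profit_nonpos_outside:
  assumes "p \<le> c \<or> q \<le> p"
  shows "profit F c q p \<le> 0"
  using assms
proof
  assume "p \<le> c"
  then show ?thesis
    unfolding profit_def using F_le_1[of "p / q"] by (intro mult_nonpos_nonneg) auto
next
  assume "q \<le> p"
  then have "1 \<le> p / q" using c_pos c_less_q by simp
  then show ?thesis by (simp add: profit_def F_above)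
qed

lemma profit_pos_inside:
  assumes "c < p" "p < q"
  shows "0 < profit F c q p"
  using assms F_less_1[of "p / q"] c_pos by (simp add: profit_def)

lemma profit_has_maximizer: "\<exists>p. \<forall>p'. profit F c q p' \<le> profit F c q p"
proof -
  have "continuous_on {c..q} (\<lambda>p. F (p / q))"
    using c_pos c_less_q
    by (intro continuous_on_compose2[OF F_continuous_on] continuous_intros)
      (auto simp: field_simps)
  then have "continuous_on {c..q} (profit F c q)"
    unfolding profit_def by (intro continuous_intros)
  then obtain p where p: "p \<in> {c..q}" "\<forall>p'\<in>{c..q}. profit F c q p' \<le> profit F c q p"
    using continuous_attains_sup[of "{c..q}" "profit F c q"] c_less_q by auto
  have "profit F c q c \<le> profit F c q p"
    using p(2) c_less_q by simp
  then have "0 \<le> profit F c q p"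
    by (simp add: profit_def)
  have "profit F c q p' \<le> profit F c q p" for p'
  proof (cases "p' \<le> c \<or> q \<le> p'")
    case True
    then show ?thesis using profit_nonpos_outside \<open>0 \<le> profit F c q p\<close> by fastforce
  qed (use p(2) in auto)
  then show ?thesis by blast
qed

text \<open>Setting the derivative of the profit to zero gives \<open>1 - F(v) = (p - c) f(v) / q\<close>
  with \<open>v = p/q\<close>, i.e. \<open>\<psi>(v) = v - (p - c)/q = c/q\<close>.\<close>
lemma profit_maximizer_first_order:
  assumes max: "\<forall>p'. profit F c q p' \<le> profit F c q p"
  shows "c < p" "p < q" "virt_val F f (p / q) = c / q"
proof -
  have "0 < profit F c q ((c + q) / 2)"
    using c_less_q by (intro profit_pos_inside) auto
  then have "0 < profit F c q p"
    using max by (meson less_le_trans)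
  then show cp: "c < p" and pq: "p < q"
    using profit_nonpos_outside[of p] by (meson leI not_le)+
  define v where "v = p / q"
  have v: "0 < v" "v < 1" using cp pq c_pos by (auto simp: v_def)
  have "((\<lambda>p. F (p / q)) has_real_derivative f v * (1 / q)) (at p)"
    unfolding v_def using F_has_real_derivative[OF v, unfolded v_def]
    by (rule DERIV_chain2) (use c_pos c_less_q in \<open>auto intro!: derivative_eq_intros\<close>)
  then have "(profit F c q has_real_derivative (1 - F v) - f v / q * (p - c)) (at p)"
    unfolding profit_def v_def by (auto intro!: derivative_eq_intros)
  then have "(1 - F v) - f v / q * (p - c) = 0"
    using DERIV_local_max[OF _ zero_less_one] max by blast
  moreover have "0 < f v" using f_pos v by simp
  ultimately have hazard: "inv_hazard F f v = (p - c) / q"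
    using c_less_q c_pos by (simp add: inv_hazard_def field_simps)
  have "virt_val F f v = c / q"
    unfolding virt_val_def hazard using c_less_q c_pos by (simp add: v_def field_simps)
  then show "virt_val F f (p / q) = c / q" by (simp add: v_def)
qed

end

end

locale cdf_with_increasing_virt_val = cdf_with_density +
  assumes f_differentiable: "\<forall>x\<in>{0<..<1}. f differentiable at x"
    and virt_val_deriv_pos: "\<forall>v\<in>{0<..<1}. virt_val F f v > 0 \<longrightarrow> deriv (virt_val F f) v > 0"
begin

lemma virt_val_has_real_derivative:
  assumes "0 < v" "v < 1"
  shows "(virt_val F f has_real_derivative deriv (virt_val F f) v) (at v)"
proof -
  have "F differentiable at v"
    using F_has_real_derivative[OF assms] real_differentiable_def by blast
  moreover have "f differentiable at v" "f v \<noteq> 0"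
    using f_differentiable f_pos assms by force+
  ultimately have "(\<lambda>v. v - (1 - F v) / f v) differentiable at v"
    by (intro derivative_intros) auto
  then show ?thesis
    by (simp add: virt_val_def[abs_def] inv_hazard_def DERIV_deriv_iff_real_differentiable)
qed

lemma virt_val_less:
  assumes "0 < a" "a < b" "b < 1" "0 < virt_val F f a"
  shows "virt_val F f a < virt_val F f b"
proof (rule less_if_deriv_pos_where_pos[where g = "virt_val F f" and g' = "deriv (virt_val F f)"])
  show "(virt_val F f has_real_derivative deriv (virt_val F f) x) (at x)" if "x \<in> {a..b}" for x
    using virt_val_has_real_derivative that assms by simp
  show "0 < deriv (virt_val F f) x" if "x \<in> {a..b}" "0 < virt_val F f x" for x
    using virt_val_deriv_pos that assms by simp
qed (use assms in auto)

lemma virt_val_eq_imp_eq: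
  assumes "a \<in> {0<..<1}" "b \<in> {0<..<1}" "0 < virt_val F f a"
    and "virt_val F f a = virt_val F f b"
  shows "a = b"
proof (cases a b rule: linorder_cases)
  case less
  then show ?thesis using virt_val_less[of a b] assms by simp
next
  case greater
  then show ?thesis using virt_val_less[of b a] assms by simp
qed

lemma opt_price_bar_first_order:
  assumes "0 < c" "c < q"
  shows "0 < opt_price_bar F c q" "opt_price_bar F c q < 1"
    "virt_val F f (opt_price_bar F c q) = c / q"
proof -
  let ?is_max = "\<lambda>p. \<forall>p'. profit F c q p' \<le> profit F c q p"
  note first_order = profit_maximizer_first_order[OF assms]
  have "p1 = p2" if "?is_max p1" "?is_max p2" for p1 p2
  proof -
    have unit: "p / q \<in> {0<..<1}" if "?is_max p" for p
      using first_order[OF that] assms by simp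
    have "p1 / q = p2 / q"
    proof (rule virt_val_eq_imp_eq)
      show "0 < virt_val F f (p1 / q)"
        using first_order(3)[OF that(1)] assms by simp
      show "virt_val F f (p1 / q) = virt_val F f (p2 / q)"
        using first_order(3)[OF that(1)] first_order(3)[OF that(2)] by simp
    qed (use unit that in auto)
    then show ?thesis using assms by simp
  qed
  with profit_has_maximizer[OF assms] have "\<exists>!p. ?is_max p" by blast
  then have "?is_max (opt_price F c q)"
    unfolding opt_price_eq_profit_argmax by (rule theI')
  note opt = first_order[OF this]
  show "0 < opt_price_bar F c q" "opt_price_bar F c q < 1"
    using opt(1,2) assms by (simp_all add: opt_price_bar_def)
  show "virt_val F f (opt_price_bar F c q) = c / q"
    using opt(3) by (simp add: opt_price_bar_def)
qed

lemma virt_val_greater_above_opt_price_bar: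
  assumes "0 < c" "c < q" "opt_price_bar F c q < v" "v < 1"
  shows "c / q < virt_val F f v"
  using virt_val_less[of "opt_price_bar F c q" v] opt_price_bar_first_order[OF assms(1,2)] assms
  by simp

end

theorem proposition2:
  fixes F f :: "real \<Rightarrow> real" and q_l q_h c :: real
  assumes "0 < q_l" and "q_l < q_h"
    and "0 < c" and "c < q_l"
    and F_below: "\<forall>x. x \<le> 0 \<longrightarrow> F x = 0"
    and F_above: "\<forall>x. 1 \<le> x \<longrightarrow> F x = 1"
    and F_density: "\<forall>x\<in>{0..1}. (f has_integral F x) {0..x}"
    and f_pos: "\<forall>v\<in>{0<..<1}. f v > 0"
    and f_C2: "C2_on f {0<..<1}"
    and psi_incr: "\<forall>v\<in>{0<..<1}. virt_val F f v > 0 \<longrightarrow> deriv (virt_val F f) v > 0"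
    and regular: "\<exists>\<delta>>0. \<exists>M. \<forall>v\<in>{0<..<1}. 1 - \<delta> < v \<longrightarrow>
                     deriv (deriv (inv_hazard F f)) v \<le> M"
    and "ereal q_h \<le> k_const F f * ereal c"
  shows "\<forall>v\<in>{opt_price_bar F c q_h <..< opt_price_bar F c q_l}.
           inv_hazard F f v * deriv (deriv (inv_hazard F f)) v + deriv (inv_hazard F f) v \<le> 1"
proof
  have f_differentiable: "\<forall>x\<in>{0<..<1}. f differentiable at x"
    using f_C2 by (simp add: C2_on_def)
  interpret cdf_with_increasing_virt_val F f
    using F_below F_above F_density f_pos f_differentiable psi_incr
    by unfold_locales
      (auto intro!: continuous_at_imp_continuous_on differentiable_imp_continuous_within)
  fix v assume v: "v \<in> {opt_price_bar F c q_h <..< opt_price_bar F c q_l}"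
  have "c < q_h" "0 < q_h" using assms(1-4) by simp_all
  have v_unit: "v \<in> {0<..<1}"
    using v opt_price_bar_first_order[OF \<open>0 < c\<close> \<open>c < q_l\<close>]
      opt_price_bar_first_order[OF \<open>0 < c\<close> \<open>c < q_h\<close>] by auto
  have psi_v: "c / q_h < virt_val F f v"
    using virt_val_greater_above_opt_price_bar[OF \<open>0 < c\<close> \<open>c < q_h\<close>] v v_unit by simp
  moreover have "0 < c / q_h" using \<open>0 < c\<close> \<open>0 < q_h\<close> by simp
  ultimately have psi_pos: "0 < virt_val F f v" by linarith
  have "1 / virt_val F f v < q_h / c"
    using psi_v psi_pos \<open>0 < c\<close> \<open>0 < q_h\<close> by (simp add: field_simps)
  then have "ereal (1 / virt_val F f v) < ereal (q_h / c)" by simp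
  also have "\<dots> \<le> k_const F f"
    using \<open>0 < c\<close> \<open>ereal q_h \<le> k_const F f * ereal c\<close> by (rule ereal_divide_le_if_le_mult)
  finally show "inv_hazard F f v * deriv (deriv (inv_hazard F f)) v + deriv (inv_hazard F f) v \<le> 1"
    by (rule hazard_inequality_if_inverse_virt_val_less_k_const[OF v_unit psi_pos])
qed

end
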